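(* Let $\mathbb{X},\mathbb{Y}$ be Euclidean spaces, $\mathbb{Z}=\mathbb{X}\times\mathbb{Y}$ equipped with a norm $\|\cdot\|$ with dual norm $\|\cdot\|_*$, and $\mathcal{X}\subseteq\mathbb{X}$, $\mathcal{Y}\subseteq\mathbb{Y}$ closed convex sets, $\mathcal{Z}=\mathcal{X}\times\mathcal{Y}$. Let $\phi:\mathcal{Z}\to\mathbb{R}$ be convex-concave (convex in $x$, concave in $y$) and differentiable, with $F(z)=(\partial_x\phi(z),-\partial_y\phi(z))$ satisfying $\sup_{z\in\mathcal{Z}}\|F(z)\|_*<\infty$ and $\|F(z)-F(z')\|_*\le L\|z-z'\|$ for all $z,z'\in\mathcal{Z}$. Let $\psi_{\mathbb{Z}}$ be smooth and $1$-strongly convex w.r.t. $\|\cdot\|$, with Bregman divergence $D_{\mathbb{Z}}(w,z)=\psi_{\mathbb{Z}}(w)-\psi_{\mathbb{Z}}(z)-\langle\nabla\psi_{\mathbb{Z}}(z),w-z\rangle$, and let $\Omega=\sup_{z,z'\in\mathcal{Z}}D_{\mathbb{Z}}(z,z')$. For $\xi,z\in\mathbb{Z}$ let $\mathrm{Prox}^{\mathcal{Z}}_{\langle\xi,\cdot\rangle}(z)=\arg\min_{w\in\mathcal{Z}}\{\langle\xi,w\rangle+D_{\mathbb{Z}}(w,z)\}$. Let $z^0\in\mathcal{Z}$, stepsizes $\tau_t>0$, and let Mirror Prox generate, for $t=0,1,2,\dots$, $\tilde z^t=\mathrm{Prox}^{\mathcal{Z}}_{\langle\tau_tF(z^t),\cdot\rangle}(z^t)$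 and $z^{t+1}=\mathrm{Prox}^{\mathcal{Z}}_{\langle\tau_tF(\tilde z^t),\cdot\rangle}(z^t)$. Let $\delta_t=\tau_t\langle F(\tilde z^t),\tilde z^t-z^{t+1}\rangle-D_{\mathbb{Z}}(z^{t+1},z^t)$. Let $w_t\ge0$ be nondecreasing, $S_T=\sum_{t=1}^Tw_t\tau_t$ (assumed positive), and $\bar z^T=(\bar x^T,\bar y^T)=\frac1{S_T}\sum_{t=1}^Tw_t\tau_t\tilde z^t$. Then for every $T\ge1$ and every $(x,y)\in\mathcal{X}\times\mathcal{Y}$, $$\phi(\bar x^T,y)-\phi(x,\bar y^T)\le\frac{w_T\Omega+\sum_{t=1}^Tw_t\delta_t}{S_T}.$$ In particular, if $\tau_t=\frac1L$ for all $t$ and $w_t=t^q$ with $q\ge0$, then $\delta_t\le0$ for all $t$ and $$\phi(\bar x^T,y)-\phi(x,\bar y^T)\le\frac{(q+1)L\Omega}{T}.$$ *)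

theory Defs
  imports "HOL-Analysis.Analysis"
begin

text \<open>An arbitrary norm on a real vector space (not necessarily the Euclidean one).\<close>
definition is_norm :: "('a::real_vector \<Rightarrow> real) \<Rightarrow> bool" where
  "is_norm nrm \<longleftrightarrow>
     (\<forall>a. 0 \<le> nrm a) \<and> (\<forall>a. nrm a = 0 \<longleftrightarrow> a = 0) \<and>
     (\<forall>a b. nrm (a + b) \<le> nrm a + nrm b) \<and>
     (\<forall>c a. nrm (c *\<^sub>R a) = \<bar>c\<bar> * nrm a)"

definition dual_norm :: "('a::real_inner \<Rightarrow> real) \<Rightarrow> 'a \<Rightarrow> real" where
  "dual_norm nrm \<xi> = Sup {\<xi> \<bullet> z | z. nrm z \<le> 1}"

definition strongly_convex_wrt :: "('a::real_vector \<Rightarrow> real) \<Rightarrow> ('a \<Rightarrow> real) \<Rightarrow> bool" where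
  "strongly_convex_wrt nrm f \<longleftrightarrow>
     (\<forall>a b u. 0 \<le> u \<and> u \<le> 1 \<longrightarrow>
        f (u *\<^sub>R a + (1 - u) *\<^sub>R b)
          \<le> u * f a + (1 - u) * f b - 1/2 * u * (1 - u) * (nrm (a - b))\<^sup>2)"

definition bregman :: "('a::real_inner \<Rightarrow> real) \<Rightarrow> ('a \<Rightarrow> 'a) \<Rightarrow> 'a \<Rightarrow> 'a \<Rightarrow> real" where
  "bregman psi gpsi w z = psi w - psi z - gpsi z \<bullet> (w - z)"

definition prox :: "('a::real_inner \<Rightarrow> real) \<Rightarrow> ('a \<Rightarrow> 'a) \<Rightarrow> 'a set \<Rightarrow> 'a \<Rightarrow> 'a \<Rightarrow> 'a" where
  "prox psi gpsi Zs \<xi> z = arg_min_on (\<lambda>w. \<xi> \<bullet> w + bregman psi gpsi w z) Zs"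

definition sp_op :: "('x \<times> 'y \<Rightarrow> 'x) \<Rightarrow> ('x \<times> 'y \<Rightarrow> 'y::real_vector) \<Rightarrow> 'x \<times> 'y \<Rightarrow> 'x \<times> 'y" where
  "sp_op gx gy z = (gx z, - gy z)"

end

theory Submission
  imports Defs
begin

text \<open>For every u in Z, the three-point inequality of the prox map, i.e. the first-order
  optimality condition of the prox problem on the convex set Z, bounds each Mirror Prox step:
  tau_t <F(zt_t), zt_t - u> <= delta_t + D(u, z_t) - D(u, z_(t+1)).
  Convexity-concavity bounds the gap phi(x', y) - phi(x, y') at p = (x', y') by <F(p), p - (x, y)>,
  and Jensen's inequality passes the gap to the weighted average. Summing with nondecreasing
  weights, the Bregman terms telescope to at most w_T Omega.
  For tau = 1/L the Lipschitz bound gives tau <F(zt) - F(z), zt - z'> <= |zt - z| |zt - z'|, which,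
  by 1-strong convexity of psi and AM-GM, is absorbed by D(z', zt) + D(zt, z); hence delta_t <= 0.
  Finally sum_(t=1..T) t^q >= T^(q+1) / (q + 1).\<close>

section \<open>Directional derivatives and convexity\<close>

lemma has_real_derivative_le_of_increment_bound:
  fixes f :: "real \<Rightarrow> real"
  assumes deriv: "(f has_real_derivative l) (at 0 within {0..1})"
    and bound: "\<And>u. 0 < u \<Longrightarrow> u < 1 \<Longrightarrow> f u - f 0 \<le> u * c + u\<^sup>2 * K"
  shows "l \<le> c"
proof -
  have "((\<lambda>u. (f u - f 0) / (u - 0)) \<longlongrightarrow> l) (at 0 within {0..1})"
    using deriv has_field_derivative_iff by blast
  moreover have "((\<lambda>u. u * K) \<longlongrightarrow> 0 * K) (at 0 within {0..1})"
    by (intro tendsto_intros)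
  ultimately have "((\<lambda>u. (f u - f 0) / (u - 0) - u * K) \<longlongrightarrow> l) (at 0 within {0..1})"
    using tendsto_diff by fastforce
  moreover have "eventually (\<lambda>u. (f u - f 0) / (u - 0) - u * K \<le> c) (at 0 within {0..1})"
    unfolding eventually_at
  proof (intro exI[of _ 1] conjI ballI impI)
    fix u :: real assume "u \<in> {0..1}" "u \<noteq> 0 \<and> dist u 0 < 1"
    then have u: "0 < u" "u < 1" by (auto simp: dist_real_def)
    have "(f u - f 0) / u \<le> (u * c + u\<^sup>2 * K) / u"
      using bound[OF u] u by (simp add: divide_right_mono)
    also have "\<dots> = c + u * K" using u by (simp add: field_simps power2_eq_square)
    finally show "(f u - f 0) / (u - 0) - u * K \<le> c" by simp
  qed simp
  moreover have "at (0::real) within {0..1} \<noteq> bot"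
    by (simp add: at_within_Icc_at_right)
  ultimately show ?thesis by (rule tendsto_upperbound)
qed

lemma has_derivative_along_segment:
  fixes f :: "'a::real_inner \<Rightarrow> real"
  assumes "(f has_derivative (\<lambda>h. G \<bullet> h)) (at p within S)"
    and "\<And>u. u \<in> {0..1} \<Longrightarrow> p + u *\<^sub>R d \<in> S"
  shows "((\<lambda>u. f (p + u *\<^sub>R d)) has_real_derivative (G \<bullet> d)) (at 0 within {0..1})"
proof -
  have "((\<lambda>u::real. p + u *\<^sub>R d) has_derivative (\<lambda>u. u *\<^sub>R d)) (at 0 within {0..1})"
    by (auto intro!: derivative_eq_intros)
  moreover have "(f has_derivative (\<lambda>h. G \<bullet> h))
      (at ((\<lambda>u::real. p + u *\<^sub>R d) 0) within ((\<lambda>u. p + u *\<^sub>R d) ` {0..1}))"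
    using assms by (auto intro: has_derivative_subset)
  ultimately have "((\<lambda>u. f (p + u *\<^sub>R d)) has_derivative (\<lambda>u. G \<bullet> (u *\<^sub>R d))) (at 0 within {0..1})"
    by (rule has_derivative_in_compose)
  then show ?thesis
    by (simp add: has_field_derivative_def mult.commute[of _ "G \<bullet> d"])
qed

lemma inner_derivative_le_of_increment_bound:
  fixes f :: "'a::real_inner \<Rightarrow> real"
  assumes deriv: "(f has_derivative (\<lambda>h. G \<bullet> h)) (at p within S)"
    and S: "convex S" "p \<in> S" "v \<in> S"
    and bound: "\<And>u. 0 < u \<Longrightarrow> u < 1 \<Longrightarrow> f (p + u *\<^sub>R (v - p)) - f p \<le> u * c + u\<^sup>2 * K"
  shows "G \<bullet> (v - p) \<le> c"
proof (rule has_real_derivative_le_of_increment_bound)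
  have "p + u *\<^sub>R (v - p) \<in> S" if "u \<in> {0..1}" for u
    using convexD[OF S(1) S(2,3), of "1 - u" u] that by (simp add: algebra_simps)
  then show "((\<lambda>u. f (p + u *\<^sub>R (v - p))) has_real_derivative G \<bullet> (v - p)) (at 0 within {0..1})"
    by (rule has_derivative_along_segment[OF deriv])
qed (use bound in simp)

lemma convex_on_gradient_inequality:
  fixes f :: "'a::real_inner \<Rightarrow> real"
  assumes "convex_on S f" and "(f has_derivative (\<lambda>h. G \<bullet> h)) (at p within S)"
    and "p \<in> S" "v \<in> S"
  shows "f p + G \<bullet> (v - p) \<le> f v"
proof -
  have "G \<bullet> (v - p) \<le> f v - f p"
  proof (rule inner_derivative_le_of_increment_bound[where K = 0])
    fix u :: real assume "0 < u" "u < 1"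
    then have "f ((1 - u) *\<^sub>R p + u *\<^sub>R v) \<le> (1 - u) * f p + u * f v"
      using assms by (intro convex_onD) auto
    then show "f (p + u *\<^sub>R (v - p)) - f p \<le> u * (f v - f p) + u\<^sup>2 * 0"
      by (simp add: algebra_simps)
  qed (use assms in \<open>auto simp: convex_on_def\<close>)
  then show ?thesis by simp
qed

lemma concave_on_gradient_inequality:
  fixes f :: "'a::real_inner \<Rightarrow> real"
  assumes "concave_on S f" and "(f has_derivative (\<lambda>h. G \<bullet> h)) (at p within S)"
    and "p \<in> S" "v \<in> S"
  shows "f v \<le> f p + G \<bullet> (v - p)"
proof -
  have "((\<lambda>x. - f x) has_derivative (\<lambda>h. (- G) \<bullet> h)) (at p within S)"
    using has_derivative_minus[OF assms(2)] by simp
  then have "- f p + (- G) \<bullet> (v - p) \<le> - f v"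
    using assms by (intro convex_on_gradient_inequality) (auto simp: concave_on_def)
  then show ?thesis by simp
qed

lemma convex_minimum_first_order:
  fixes f :: "'a::real_inner \<Rightarrow> real"
  assumes "(f has_derivative (\<lambda>h. G \<bullet> h)) (at p within S)"
    and "convex S" "p \<in> S" "v \<in> S" and min: "\<And>x. x \<in> S \<Longrightarrow> f p \<le> f x"
  shows "0 \<le> G \<bullet> (v - p)"
proof -
  have "((\<lambda>x. - f x) has_derivative (\<lambda>h. (- G) \<bullet> h)) (at p within S)"
    using has_derivative_minus[OF assms(1)] by simp
  then have "(- G) \<bullet> (v - p) \<le> 0"
  proof (rule inner_derivative_le_of_increment_bound[where K = 0])
    fix u :: real assume "0 < u" "u < 1"
    then have "p + u *\<^sub>R (v - p) \<in> S"
      using convexD[OF assms(2-4), of "1 - u" u] by (simp add: algebra_simps)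
    then show "- f (p + u *\<^sub>R (v - p)) - - f p \<le> u * 0 + u\<^sup>2 * 0"
      using min by fastforce
  qed (use assms in auto)
  then show ?thesis by simp
qed

lemma has_derivative_Pair_slices:
  fixes phi :: "'x::real_inner \<times> 'y::real_inner \<Rightarrow> real"
  assumes "(phi has_derivative (\<lambda>(h, k). gx \<bullet> h + gy \<bullet> k)) (at (x, y) within Xs \<times> Ys)"
    and "x \<in> Xs" "y \<in> Ys"
  shows "((\<lambda>x'. phi (x', y)) has_derivative (\<lambda>h. gx \<bullet> h)) (at x within Xs)"
    and "((\<lambda>y'. phi (x, y')) has_derivative (\<lambda>k. gy \<bullet> k)) (at y within Ys)"
proof -
  have "((\<lambda>x'. (x', y)) has_derivative (\<lambda>h. (h, 0))) (at x within Xs)"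
    by (auto intro!: derivative_eq_intros)
  moreover have "(phi has_derivative (\<lambda>(h, k). gx \<bullet> h + gy \<bullet> k)) (at (x, y) within (\<lambda>x'. (x', y)) ` Xs)"
    using assms by (auto intro: has_derivative_subset)
  ultimately show "((\<lambda>x'. phi (x', y)) has_derivative (\<lambda>h. gx \<bullet> h)) (at x within Xs)"
    using has_derivative_in_compose[of "\<lambda>x'. (x', y)"] by fastforce
next
  have "((\<lambda>y'. (x, y')) has_derivative (\<lambda>k. (0, k))) (at y within Ys)"
    by (auto intro!: derivative_eq_intros)
  moreover have "(phi has_derivative (\<lambda>(h, k). gx \<bullet> h + gy \<bullet> k)) (at (x, y) within (\<lambda>y'. (x, y')) ` Ys)"
    using assms by (auto intro: has_derivative_subset)
  ultimately show "((\<lambda>y'. phi (x, y')) has_derivative (\<lambda>k. gy \<bullet> k)) (at y within Ys)"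
    using has_derivative_in_compose[of "\<lambda>y'. (x, y')"] by fastforce
qed

lemma linear_le_quadratic:
  fixes a b M r :: real
  assumes "0 < a" "1 \<le> r" "(\<bar>b\<bar> + \<bar>M\<bar>) / a \<le> r"
  shows "b * r + M \<le> a * r\<^sup>2"
proof -
  have "r * (\<bar>b\<bar> + \<bar>M\<bar>) \<le> r * (a * r)"
    using assms by (intro mult_left_mono) (auto simp: divide_le_eq mult.commute)
  moreover have "b * r \<le> \<bar>b\<bar> * r" "M \<le> \<bar>M\<bar> * r"
    using assms(2) by (auto intro: mult_right_mono order_trans[OF abs_ge_self] simp: mult_le_cancel_left1)
  ultimately show ?thesis by (simp add: power2_eq_square algebra_simps)
qed

lemma continuous_on_closed_attains_inf_coercive:
  fixes f :: "'a::heine_borel \<Rightarrow> real"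
  assumes "closed S" "a \<in> S" "continuous_on S f"
    and far: "\<And>v. v \<in> S \<Longrightarrow> R < dist c v \<Longrightarrow> f a \<le> f v"
  obtains m where "m \<in> S" "\<And>v. v \<in> S \<Longrightarrow> f m \<le> f v"
proof -
  define K where "K = S \<inter> cball c (max R (dist c a))"
  have "a \<in> K" by (simp add: K_def assms(2))
  moreover have "compact K" unfolding K_def using assms(1) by (intro closed_Int_compact) auto
  moreover have "continuous_on K f" using assms(3) by (rule continuous_on_subset) (simp add: K_def)
  ultimately obtain m where m: "m \<in> K" "\<And>v. v \<in> K \<Longrightarrow> f m \<le> f v"
    using continuous_attains_inf by (metis empty_iff)
  have "f m \<le> f v" if "v \<in> S" for v
  proof (cases "v \<in> K")
    case False
    then have "R < dist c v" using that by (simp add: K_def)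
    then show ?thesis using far[OF that] m(2)[OF \<open>a \<in> K\<close>] by linarith
  qed (rule m(2))
  then show ?thesis using that m(1) K_def by blast
qed

section \<open>Norms and dual norms\<close>

lemma
  assumes "is_norm nrm"
  shows is_norm_nonneg: "0 \<le> nrm a"
    and is_norm_eq_0_iff: "nrm a = 0 \<longleftrightarrow> a = 0"
    and is_norm_triangle: "nrm (a + b) \<le> nrm a + nrm b"
    and is_norm_scaleR: "nrm (c *\<^sub>R a) = \<bar>c\<bar> * nrm a"
  using assms unfolding is_norm_def by auto

lemma is_norm_minus_commute:
  assumes "is_norm nrm"
  shows "nrm (a - b) = nrm (b - a)"
  using is_norm_scaleR[OF assms, of "-1" "a - b"] by simp

lemma is_norm_pos:
  assumes "is_norm nrm" "a \<noteq> 0"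
  shows "0 < nrm a"
  using assms is_norm_nonneg is_norm_eq_0_iff by (metis order_le_less)

lemma is_norm_convex_on:
  assumes "is_norm nrm"
  shows "convex_on UNIV nrm"
proof (rule convex_onI)
  fix t :: real and x y assume "0 < t" "t < 1"
  then show "nrm ((1 - t) *\<^sub>R x + t *\<^sub>R y) \<le> (1 - t) * nrm x + t * nrm y"
    using is_norm_triangle[OF assms, of "(1 - t) *\<^sub>R x" "t *\<^sub>R y"] is_norm_scaleR[OF assms]
    by simp
qed simp

lemma is_norm_ge_norm:
  fixes nrm :: "'a::euclidean_space \<Rightarrow> real"
  assumes N: "is_norm nrm"
  obtains c where "0 < c" "\<And>a. c * norm a \<le> nrm a"
proof -
  have "continuous_on (sphere 0 1) nrm"
    using convex_on_continuous[OF open_UNIV is_norm_convex_on[OF N]]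
    by (rule continuous_on_subset) simp
  moreover obtain b :: 'a where "b \<in> Basis" using nonempty_Basis by blast
  then have "sphere (0::'a) 1 \<noteq> {}" by (auto simp: norm_Basis)
  ultimately obtain a0 where a0: "a0 \<in> sphere 0 1" "\<And>a. a \<in> sphere 0 1 \<Longrightarrow> nrm a0 \<le> nrm a"
    using continuous_attains_inf[OF compact_sphere] by blast
  have "nrm a0 * norm a \<le> nrm a" for a
  proof (cases "a = 0")
    case False
    then have "nrm a0 \<le> nrm ((1 / norm a) *\<^sub>R a)" by (intro a0) auto
    then show ?thesis using False by (simp add: is_norm_scaleR[OF N] field_simps)
  qed (simp add: is_norm_nonneg[OF N])
  moreover have "0 < nrm a0" using a0 by (intro is_norm_pos[OF N]) auto
  ultimately show ?thesis using that by blast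
qed

lemma bdd_above_dual_norm_set:
  fixes nrm :: "'a::euclidean_space \<Rightarrow> real"
  assumes N: "is_norm nrm"
  shows "bdd_above {\<xi> \<bullet> z | z. nrm z \<le> 1}"
proof -
  obtain c where c: "0 < c" "\<And>a. c * norm a \<le> nrm a" using is_norm_ge_norm[OF N] by blast
  have "\<xi> \<bullet> z \<le> norm \<xi> / c" if "nrm z \<le> 1" for z
  proof -
    have "norm z \<le> 1 / c" using c(2)[of z] that c(1) by (simp add: field_simps)
    then have "norm \<xi> * norm z \<le> norm \<xi> * (1 / c)" by (intro mult_left_mono) auto
    then show ?thesis using norm_cauchy_schwarz[of \<xi> z] by simp
  qed
  then show ?thesis by (intro bdd_aboveI[where M = "norm \<xi> / c"]) blast
qed

lemma inner_le_dual_norm: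
  fixes nrm :: "'a::euclidean_space \<Rightarrow> real"
  assumes N: "is_norm nrm"
  shows "\<xi> \<bullet> v \<le> dual_norm nrm \<xi> * nrm v"
proof (cases "v = 0")
  case False
  then have v: "0 < nrm v" by (rule is_norm_pos[OF N])
  have "nrm ((1 / nrm v) *\<^sub>R v) \<le> 1" using v by (simp add: is_norm_scaleR[OF N])
  then have "\<xi> \<bullet> ((1 / nrm v) *\<^sub>R v) \<le> dual_norm nrm \<xi>"
    unfolding dual_norm_def by (intro cSup_upper bdd_above_dual_norm_set[OF N]) blast
  then show ?thesis using v by (simp add: field_simps)
qed (use is_norm_eq_0_iff[OF N, of 0] in simp)

section \<open>Bregman divergences and the prox map\<close>

lemma bregman_ge_half_sq:
  fixes psi :: "'a::real_inner \<Rightarrow> real"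
  assumes deriv: "\<And>p. (psi has_derivative (\<lambda>h. gpsi p \<bullet> h)) (at p)"
    and sc: "strongly_convex_wrt nrm psi"
  shows "1/2 * (nrm (w - z))\<^sup>2 \<le> bregman psi gpsi w z"
proof -
  define N where "N = (nrm (w - z))\<^sup>2"
  have "gpsi z \<bullet> (w - z) \<le> psi w - psi z - 1/2 * N"
  proof (rule inner_derivative_le_of_increment_bound[where S = UNIV and K = "1/2 * N"])
    fix u :: real assume "0 < u" "u < 1"
    moreover have "z + u *\<^sub>R (w - z) = u *\<^sub>R w + (1 - u) *\<^sub>R z" by (simp add: algebra_simps)
    ultimately have "psi (z + u *\<^sub>R (w - z)) \<le> u * psi w + (1 - u) * psi z - 1/2 * u * (1 - u) * N"
      using sc unfolding strongly_convex_wrt_def N_def by auto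
    moreover have "u * psi w + (1 - u) * psi z - 1/2 * u * (1 - u) * N - psi z
        = u * (psi w - psi z - 1/2 * N) + u\<^sup>2 * (1/2 * N)"
      by (simp add: power2_eq_square field_simps)
    ultimately show "psi (z + u *\<^sub>R (w - z)) - psi z \<le> u * (psi w - psi z - 1/2 * N) + u\<^sup>2 * (1/2 * N)"
      by linarith
  qed (use deriv in auto)
  then show ?thesis unfolding bregman_def N_def by simp
qed

lemma bregman_nonneg:
  fixes psi :: "'a::real_inner \<Rightarrow> real"
  assumes "\<And>p. (psi has_derivative (\<lambda>h. gpsi p \<bullet> h)) (at p)" and "strongly_convex_wrt nrm psi"
  shows "0 \<le> bregman psi gpsi w z"
proof -
  have "0 \<le> 1/2 * (nrm (w - z))\<^sup>2" by simp
  then show ?thesis using bregman_ge_half_sq[OF assms, of w z] by linarith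
qed

lemma bregman_three_point:
  "bregman psi gpsi u z - bregman psi gpsi u p - bregman psi gpsi p z = (gpsi p - gpsi z) \<bullet> (u - p)"
  unfolding bregman_def by (simp add: inner_diff_left inner_diff_right)

locale bregman_prox =
  fixes nrm :: "'a::euclidean_space \<Rightarrow> real" and psi :: "'a \<Rightarrow> real" and gpsi :: "'a \<Rightarrow> 'a"
    and Zs :: "'a set"
  assumes is_norm: "is_norm nrm"
    and psi_deriv: "\<And>p. (psi has_derivative (\<lambda>h. gpsi p \<bullet> h)) (at p)"
    and psi_strongly_convex: "strongly_convex_wrt nrm psi"
    and closed: "closed Zs" and convex: "convex Zs" and nonempty: "Zs \<noteq> {}"
begin

lemma prox_objective_has_derivative:
  "((\<lambda>w. \<xi> \<bullet> w + bregman psi gpsi w z) has_derivative (\<lambda>h. (\<xi> + gpsi p - gpsi z) \<bullet> h))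
    (at p within S)"
proof -
  have "((\<lambda>w. \<xi> \<bullet> w + bregman psi gpsi w z)
      has_derivative (\<lambda>h. \<xi> \<bullet> h + (gpsi p \<bullet> h - 0 - gpsi z \<bullet> (h - 0)))) (at p within S)"
    unfolding bregman_def
    by (intro has_derivative_add has_derivative_diff has_derivative_inner_right has_derivative_ident
        has_derivative_const has_derivative_at_withinI[OF psi_deriv])
  then show ?thesis by (simp add: inner_add_left inner_diff_left add_diff_eq)
qed

text \<open>Strong convexity makes the prox objective coercive, so it attains its infimum on Zs.\<close>
lemma prox_is_arg_min:
  "is_arg_min (\<lambda>w. \<xi> \<bullet> w + bregman psi gpsi w z) (\<lambda>w. w \<in> Zs) (prox psi gpsi Zs \<xi> z)"
proof -
  define g where "g w = \<xi> \<bullet> w + bregman psi gpsi w z" for w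
  obtain c where c: "0 < c" "\<And>a. c * norm a \<le> nrm a" using is_norm_ge_norm[OF is_norm] by blast
  obtain a where a: "a \<in> Zs" using nonempty by blast
  define R where "R = max 1 ((\<bar>norm \<xi>\<bar> + \<bar>g a - \<xi> \<bullet> z\<bar>) / (c\<^sup>2 / 2))"
  have "g a \<le> g v" if "R < dist z v" for v
  proof -
    define r where "r = dist z v"
    have "c * r \<le> nrm (v - z)" using c(2) by (simp add: r_def dist_norm norm_minus_commute)
    then have "(c * r)\<^sup>2 \<le> (nrm (v - z))\<^sup>2" using c(1) by (intro power_mono) (auto simp: r_def)
    then have "c\<^sup>2 / 2 * r\<^sup>2 \<le> bregman psi gpsi v z"
      using bregman_ge_half_sq[OF psi_deriv psi_strongly_convex, of v z] by (simp add: power_mult_distrib)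
    moreover have "- (norm \<xi> * r) \<le> \<xi> \<bullet> (v - z)"
      using Cauchy_Schwarz_ineq2[of \<xi> "v - z"] by (simp add: r_def dist_norm norm_minus_commute)
    moreover have "norm \<xi> * r + (g a - \<xi> \<bullet> z) \<le> c\<^sup>2 / 2 * r\<^sup>2"
    proof (rule linear_le_quadratic)
      show "1 \<le> r" "(\<bar>norm \<xi>\<bar> + \<bar>g a - \<xi> \<bullet> z\<bar>) / (c\<^sup>2 / 2) \<le> r"
        using that unfolding r_def R_def by simp_all
    qed (use c(1) in simp)
    moreover have "\<xi> \<bullet> v = \<xi> \<bullet> z + \<xi> \<bullet> (v - z)" by (simp add: inner_diff_right)
    ultimately show ?thesis unfolding g_def by linarith
  qed
  moreover have "continuous_on Zs g"
    unfolding g_def using prox_objective_has_derivative by (rule has_derivative_continuous_on)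
  ultimately obtain m where "m \<in> Zs" "\<And>v. v \<in> Zs \<Longrightarrow> g m \<le> g v"
    using continuous_on_closed_attains_inf_coercive[OF closed a, of g R z] by blast
  then have "\<exists>m. is_arg_min g (\<lambda>w. w \<in> Zs) m" by (auto simp: is_arg_min_linorder)
  then show ?thesis unfolding prox_def arg_min_on_def arg_min_def g_def[symmetric] by (rule someI_ex)
qed

lemma prox_mem: "prox psi gpsi Zs \<xi> z \<in> Zs"
  using prox_is_arg_min by (simp add: is_arg_min_def)

lemma prox_three_point:
  fixes \<xi> z u :: 'a
  assumes "u \<in> Zs"
  defines "p \<equiv> prox psi gpsi Zs \<xi> z"
  shows "\<xi> \<bullet> (p - u) \<le> bregman psi gpsi u z - bregman psi gpsi u p - bregman psi gpsi p z"
proof -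
  have "0 \<le> (\<xi> + gpsi p - gpsi z) \<bullet> (u - p)"
    using prox_is_arg_min assms convex prox_mem
    by (intro convex_minimum_first_order[OF prox_objective_has_derivative])
      (auto simp: is_arg_min_linorder)
  moreover have "(\<xi> + gpsi p - gpsi z) \<bullet> (u - p) = (gpsi p - gpsi z) \<bullet> (u - p) - \<xi> \<bullet> (p - u)"
    by (simp add: algebra_simps)
  ultimately show ?thesis using bregman_three_point[of psi gpsi u z p] by linarith
qed

definition bregman_diameter :: real where
  "bregman_diameter = Sup {bregman psi gpsi p p' | p p'. p \<in> Zs \<and> p' \<in> Zs}"

lemma bregman_le_diameter:
  assumes "bdd_above {bregman psi gpsi p p' | p p'. p \<in> Zs \<and> p' \<in> Zs}" "u \<in> Zs" "v \<in> Zs"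
  shows "bregman psi gpsi u v \<le> bregman_diameter"
  unfolding bregman_diameter_def using assms by (intro cSup_upper) auto

lemma bregman_diameter_nonneg:
  assumes "bdd_above {bregman psi gpsi p p' | p p'. p \<in> Zs \<and> p' \<in> Zs}"
  shows "0 \<le> bregman_diameter"
  using nonempty bregman_le_diameter[OF assms] bregman_nonneg[OF psi_deriv psi_strongly_convex]
  by (meson ex_in_conv order_trans)

end

section \<open>Saddle functions\<close>

lemma saddle_gap_le_inner_sp_op:
  fixes phi :: "'x::real_inner \<times> 'y::real_inner \<Rightarrow> real"
  assumes cvx: "\<forall>y\<in>Ys. convex_on Xs (\<lambda>x. phi (x, y))"
    and ccv: "\<forall>x\<in>Xs. concave_on Ys (\<lambda>y. phi (x, y))"
    and diff: "\<forall>p\<in>Xs \<times> Ys. (phi has_derivative (\<lambda>(h, k). gx p \<bullet> h + gy p \<bullet> k)) (at p within Xs \<times> Ys)"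
    and p: "p \<in> Xs \<times> Ys" and x: "x \<in> Xs" and y: "y \<in> Ys"
  shows "phi (fst p, y) - phi (x, snd p) \<le> sp_op gx gy p \<bullet> (p - (x, y))"
proof -
  obtain x' y' where p': "p = (x', y')" "x' \<in> Xs" "y' \<in> Ys" using p by auto
  note slices = has_derivative_Pair_slices[OF diff[rule_format, OF p, unfolded p'(1)] p'(2,3)]
  have "phi (x', y') + gx p \<bullet> (x - x') \<le> phi (x, y')"
    using cvx slices(1) p' x by (intro convex_on_gradient_inequality) auto
  moreover have "phi (x', y) \<le> phi (x', y') + gy p \<bullet> (y - y')"
    using ccv slices(2) p' y by (intro concave_on_gradient_inequality) auto
  ultimately show ?thesis
    unfolding p'(1) sp_op_def by (simp add: inner_Pair inner_diff_right)
qed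

lemma saddle_gap_of_average_le:
  fixes phi :: "'x::real_vector \<times> 'y::real_vector \<Rightarrow> real"
  assumes cvx: "\<forall>y\<in>Ys. convex_on Xs (\<lambda>x. phi (x, y))"
    and ccv: "\<forall>x\<in>Xs. concave_on Ys (\<lambda>y. phi (x, y))"
    and I: "finite I" "I \<noteq> {}" and a: "\<And>i. i \<in> I \<Longrightarrow> 0 \<le> a i" "sum a I = 1"
    and p: "\<And>i. i \<in> I \<Longrightarrow> p i \<in> Xs \<times> Ys" and x: "x \<in> Xs" and y: "y \<in> Ys"
  defines "pbar \<equiv> \<Sum>i\<in>I. a i *\<^sub>R p i"
  shows "phi (fst pbar, y) - phi (x, snd pbar) \<le> (\<Sum>i\<in>I. a i * (phi (fst (p i), y) - phi (x, snd (p i))))"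
proof -
  have "phi (fst pbar, y) \<le> (\<Sum>i\<in>I. a i * phi (fst (p i), y))"
    unfolding pbar_def fst_sum fst_scaleR
    using convex_on_sum[OF I bspec[OF cvx y] a(2) a(1), of "\<lambda>i. fst (p i)"] p
    by (auto simp: mem_Times_iff)
  moreover have "- phi (x, snd pbar) \<le> (\<Sum>i\<in>I. a i * - phi (x, snd (p i)))"
    unfolding pbar_def snd_sum snd_scaleR
    using convex_on_sum[OF I _ a(2) a(1), of Ys "\<lambda>y. - phi (x, y)" "\<lambda>i. snd (p i)"] p ccv x
    by (auto simp: mem_Times_iff concave_on_def)
  ultimately show ?thesis by (simp add: right_diff_distrib sum_subtractf sum_negf)
qed

section \<open>Weighted sums\<close>

lemma weighted_telescoping_le:
  fixes w d :: "nat \<Rightarrow> real"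
  assumes w_nonneg: "\<forall>t\<ge>1. 0 \<le> w t" and w_mono: "\<forall>s t. 1 \<le> s \<longrightarrow> s \<le> t \<longrightarrow> w s \<le> w t"
    and d: "\<And>t. 0 \<le> d t" "\<And>t. d t \<le> M" and T: "1 \<le> T"
  shows "(\<Sum>t = 1..T. w t * (d t - d (Suc t))) \<le> w T * M"
proof -
  have "(\<Sum>t = 1..T. w t * (d t - d (Suc t))) + w T * d (Suc T) \<le> w T * M"
    using T
  proof (induction T rule: nat_induct_at_least)
    case base
    have "w 1 * d 1 \<le> w 1 * M" using d(2)[of 1] w_nonneg by (simp add: mult_left_mono)
    then show ?case by (simp add: algebra_simps)
  next
    case (Suc n)
    have "(\<Sum>t = 1..Suc n. w t * (d t - d (Suc t))) + w (Suc n) * d (Suc (Suc n))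
        = ((\<Sum>t = 1..n. w t * (d t - d (Suc t))) + w n * d (Suc n)) + (w (Suc n) - w n) * d (Suc n)"
      using Suc.hyps by (simp add: algebra_simps)
    also have "\<dots> \<le> w n * M + (w (Suc n) - w n) * M"
      using Suc w_mono d(2)[of "Suc n"] by (intro add_mono mult_left_mono) auto
    finally show ?case by (simp add: algebra_simps)
  qed
  moreover have "0 \<le> w T * d (Suc T)" using w_nonneg T d(1) by simp
  ultimately show ?thesis by linarith
qed

lemma powr_le_sum_powr:
  fixes q :: real
  assumes q: "0 \<le> q" and T: "1 \<le> T"
  shows "real T powr (q + 1) \<le> (q + 1) * (\<Sum>t = 1..T. real t powr q)"
  using T
proof (induction T rule: nat_induct_at_least)
  case (Suc n)
  have "\<exists>\<zeta>>real n. \<zeta> < real (Suc n) \<and>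
      real (Suc n) powr (q + 1) - real n powr (q + 1) = (real (Suc n) - real n) * ((q + 1) * \<zeta> powr q)"
    using Suc.hyps by (intro MVT2) (auto intro!: derivative_eq_intros)
  then obtain \<zeta> where \<zeta>: "real n < \<zeta>" "\<zeta> < real (Suc n)"
    and mvt: "real (Suc n) powr (q + 1) - real n powr (q + 1) = (q + 1) * \<zeta> powr q" by auto
  have "(q + 1) * \<zeta> powr q \<le> (q + 1) * real (Suc n) powr q"
    using \<zeta> q Suc.hyps by (intro mult_left_mono powr_mono2) auto
  then have "real (Suc n) powr (q + 1) \<le> real n powr (q + 1) + (q + 1) * real (Suc n) powr q"
    using mvt by linarith
  also have "\<dots> \<le> (q + 1) * (\<Sum>t = 1..Suc n. real t powr q)"
    using Suc by (simp add: algebra_simps)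
  finally show ?case .
qed (use q in simp)

section \<open>Mirror Prox\<close>

locale mirror_prox = bregman_prox nrm psi gpsi "Xs \<times> Ys"
  for nrm :: "'x::euclidean_space \<times> 'y::euclidean_space \<Rightarrow> real" and psi gpsi
    and Xs :: "'x set" and Ys :: "'y set" +
  fixes phi :: "'x \<times> 'y \<Rightarrow> real" and gx :: "'x \<times> 'y \<Rightarrow> 'x" and gy :: "'x \<times> 'y \<Rightarrow> 'y"
    and z zt :: "nat \<Rightarrow> 'x \<times> 'y" and tau :: "nat \<Rightarrow> real"
  assumes convex_in_x: "\<forall>y\<in>Ys. convex_on Xs (\<lambda>x. phi (x, y))"
    and concave_in_y: "\<forall>x\<in>Xs. concave_on Ys (\<lambda>y. phi (x, y))"
    and phi_deriv:
      "\<forall>p\<in>Xs \<times> Ys. (phi has_derivative (\<lambda>(h, k). gx p \<bullet> h + gy p \<bullet> k)) (at p within Xs \<times> Ys)"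
    and z0_mem: "z 0 \<in> Xs \<times> Ys"
    and tau_pos: "\<And>t. 0 < tau t"
    and zt_eq: "\<And>t. zt t = prox psi gpsi (Xs \<times> Ys) (tau t *\<^sub>R sp_op gx gy (z t)) (z t)"
    and z_Suc: "\<And>t. z (Suc t) = prox psi gpsi (Xs \<times> Ys) (tau t *\<^sub>R sp_op gx gy (zt t)) (z t)"
begin

abbreviation F :: "'x \<times> 'y \<Rightarrow> 'x \<times> 'y" where "F \<equiv> sp_op gx gy"

abbreviation D :: "'x \<times> 'y \<Rightarrow> 'x \<times> 'y \<Rightarrow> real" where "D \<equiv> bregman psi gpsi"

definition delta :: "nat \<Rightarrow> real" where
  "delta t = tau t * (F (zt t) \<bullet> (zt t - z (Suc t))) - D (z (Suc t)) (z t)"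

definition weight_sum :: "(nat \<Rightarrow> real) \<Rightarrow> nat \<Rightarrow> real" where
  "weight_sum w T = (\<Sum>t = 1..T. w t * tau t)"

definition ergodic_average :: "(nat \<Rightarrow> real) \<Rightarrow> nat \<Rightarrow> 'x \<times> 'y" where
  "ergodic_average w T = (1 / weight_sum w T) *\<^sub>R (\<Sum>t = 1..T. (w t * tau t) *\<^sub>R zt t)"

lemma z_mem: "z t \<in> Xs \<times> Ys"
  using z0_mem prox_mem z_Suc by (cases t) auto

lemma zt_mem: "zt t \<in> Xs \<times> Ys"
  using prox_mem zt_eq by auto

lemma mirror_prox_step:
  assumes "u \<in> Xs \<times> Ys"
  shows "tau t * (F (zt t) \<bullet> (zt t - u)) \<le> delta t + D u (z t) - D u (z (Suc t))"
proof -
  have "(tau t *\<^sub>R F (zt t)) \<bullet> (z (Suc t) - u) \<le> D u (z t) - D u (z (Suc t)) - D (z (Suc t)) (z t)"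
    using prox_three_point[OF assms] by (simp only: z_Suc)
  moreover have "tau t * (F (zt t) \<bullet> (zt t - u))
      = tau t * (F (zt t) \<bullet> (zt t - z (Suc t))) + (tau t *\<^sub>R F (zt t)) \<bullet> (z (Suc t) - u)"
    by (simp add: inner_diff_right algebra_simps)
  ultimately show ?thesis unfolding delta_def by linarith
qed

lemma delta_nonpos:
  assumes Lip: "\<forall>p\<in>Xs \<times> Ys. \<forall>p'\<in>Xs \<times> Ys. dual_norm nrm (F p - F p') \<le> L * nrm (p - p')"
    and step: "tau t * L \<le> 1"
  shows "delta t \<le> 0"
proof -
  define A where "A = zt t - z t"
  define B where "B = zt t - z (Suc t)"
  have prox_bound: "(tau t *\<^sub>R F (z t)) \<bullet> B \<le> D (z (Suc t)) (z t) - D (z (Suc t)) (zt t) - D (zt t) (z t)"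
    using prox_three_point[OF z_mem[of "Suc t"]] unfolding B_def by (simp only: zt_eq)
  have "(F (zt t) - F (z t)) \<bullet> B \<le> dual_norm nrm (F (zt t) - F (z t)) * nrm B"
    by (rule inner_le_dual_norm[OF is_norm])
  also have "\<dots> \<le> L * nrm A * nrm B"
  proof (rule mult_right_mono)
    show "dual_norm nrm (F (zt t) - F (z t)) \<le> L * nrm A"
      using Lip zt_mem z_mem unfolding A_def by blast
  qed (rule is_norm_nonneg[OF is_norm])
  finally have "tau t * ((F (zt t) - F (z t)) \<bullet> B) \<le> (tau t * L) * (nrm A * nrm B)"
    using tau_pos[of t] by (simp add: mult_left_mono mult.assoc)
  also have "\<dots> \<le> nrm A * nrm B"
    using mult_right_mono[OF step, of "nrm A * nrm B"] is_norm_nonneg[OF is_norm] by simp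
  also have "\<dots> \<le> 1/2 * (nrm A)\<^sup>2 + 1/2 * (nrm B)\<^sup>2"
    using sum_squares_bound[of "nrm A" "nrm B"] by (simp add: power2_diff)
  also have "\<dots> \<le> D (zt t) (z t) + D (z (Suc t)) (zt t)"
    using bregman_ge_half_sq[OF psi_deriv psi_strongly_convex] is_norm_minus_commute[OF is_norm]
    unfolding A_def B_def by (metis add_mono)
  finally have "tau t * (F (zt t) \<bullet> B) \<le> tau t * (F (z t) \<bullet> B) + D (zt t) (z t) + D (z (Suc t)) (zt t)"
    by (simp add: inner_diff_left algebra_simps)
  then show ?thesis
    using prox_bound unfolding delta_def B_def[symmetric] by simp
qed

lemma ergodic_gap_bound:
  assumes Omega: "bdd_above {D p p' | p p'. p \<in> Xs \<times> Ys \<and> p' \<in> Xs \<times> Ys}"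
    and w_nonneg: "\<forall>t\<ge>1. 0 \<le> w t" and w_mono: "\<forall>s t. 1 \<le> s \<longrightarrow> s \<le> t \<longrightarrow> w s \<le> w t"
    and T: "1 \<le> T" and S: "0 < weight_sum w T" and x: "x \<in> Xs" and y: "y \<in> Ys"
  defines "zbar \<equiv> ergodic_average w T"
  shows "phi (fst zbar, y) - phi (x, snd zbar)
    \<le> (w T * bregman_diameter + (\<Sum>t = 1..T. w t * delta t)) / weight_sum w T"
proof -
  define u where "u = (x, y)"
  have u: "u \<in> Xs \<times> Ys" using x y by (simp add: u_def)
  define gap where "gap p = phi (fst p, y) - phi (x, snd p)" for p
  define a where "a t = w t * tau t / weight_sum w T" for t
  have a_nonneg: "0 \<le> a t" if "t \<in> {1..T}" for t
    using that w_nonneg tau_pos[of t] S by (simp add: a_def less_imp_le)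
  have "sum a {1..T} = 1"
    using S by (simp add: a_def weight_sum_def flip: sum_divide_distrib)
  moreover have "zbar = (\<Sum>t = 1..T. a t *\<^sub>R zt t)"
    by (simp add: zbar_def ergodic_average_def a_def scaleR_sum_right divide_inverse_commute)
  ultimately have "gap zbar \<le> (\<Sum>t = 1..T. a t * gap (zt t))"
    unfolding gap_def using T a_nonneg zt_mem x y
    by (simp only:) (intro saddle_gap_of_average_le[OF convex_in_x concave_in_y], auto)
  also have "\<dots> = (\<Sum>t = 1..T. w t * (tau t * gap (zt t))) / weight_sum w T"
    by (simp add: a_def sum_divide_distrib mult.assoc)
  also have "\<dots> \<le> (\<Sum>t = 1..T. w t * (delta t + (D u (z t) - D u (z (Suc t))))) / weight_sum w T"
  proof (intro divide_right_mono sum_mono mult_left_mono)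
    fix t assume "t \<in> {1..T}"
    have "gap (zt t) \<le> F (zt t) \<bullet> (zt t - u)"
      unfolding gap_def u_def using zt_mem x y
      by (intro saddle_gap_le_inner_sp_op[OF convex_in_x concave_in_y phi_deriv])
    then have "tau t * gap (zt t) \<le> tau t * (F (zt t) \<bullet> (zt t - u))"
      using tau_pos[of t] by (simp add: mult_left_mono)
    then show "tau t * gap (zt t) \<le> delta t + (D u (z t) - D u (z (Suc t)))"
      using mirror_prox_step[OF u, of t] by linarith
  qed (use S w_nonneg in auto)
  also have "\<dots> \<le> ((\<Sum>t = 1..T. w t * delta t) + w T * bregman_diameter) / weight_sum w T"
    using weighted_telescoping_le[OF w_nonneg w_mono, of "\<lambda>t. D u (z t)"]
      bregman_nonneg[OF psi_deriv psi_strongly_convex] bregman_le_diameter[OF Omega u z_mem] T S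
    by (simp add: distrib_left sum.distrib divide_right_mono)
  finally show ?thesis by (simp add: gap_def add.commute)
qed

lemma ergodic_gap_bound_powr_weights:
  assumes Lip: "\<forall>p\<in>Xs \<times> Ys. \<forall>p'\<in>Xs \<times> Ys. dual_norm nrm (F p - F p') \<le> L * nrm (p - p')"
    and Omega: "bdd_above {D p p' | p p'. p \<in> Xs \<times> Ys \<and> p' \<in> Xs \<times> Ys}"
    and q: "0 \<le> q" and tau_L: "\<forall>t. tau t = 1 / L" and w: "\<forall>t\<ge>1. w t = real t powr q"
    and T: "1 \<le> T" and x: "x \<in> Xs" and y: "y \<in> Ys"
  defines "zbar \<equiv> ergodic_average w T"
  shows "phi (fst zbar, y) - phi (x, snd zbar) \<le> (q + 1) * L * bregman_diameter / real T"
proof -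
  define P where "P = (\<Sum>t = 1..T. real t powr q)"
  have L: "0 < L" using tau_pos[of 0] tau_L by (simp add: zero_less_divide_iff)
  have P: "0 < P" unfolding P_def using T by (intro sum_pos) auto
  have S: "weight_sum w T = P / L"
    unfolding weight_sum_def P_def using w tau_L by (simp add: sum_divide_distrib)
  have w_nonneg: "\<forall>t\<ge>1. 0 \<le> w t" and w_mono: "\<forall>s t. 1 \<le> s \<longrightarrow> s \<le> t \<longrightarrow> w s \<le> w t"
    using w q by (auto intro: powr_mono2)
  have "phi (fst zbar, y) - phi (x, snd zbar)
      \<le> (w T * bregman_diameter + (\<Sum>t = 1..T. w t * delta t)) / weight_sum w T"
    unfolding zbar_def using S P L by (intro ergodic_gap_bound[OF Omega w_nonneg w_mono T _ x y]) simp
  also have "\<dots> \<le> w T * bregman_diameter / weight_sum w T"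
  proof (intro divide_right_mono)
    have "(\<Sum>t = 1..T. w t * delta t) \<le> 0"
      using delta_nonpos[OF Lip] w_nonneg tau_L L by (intro sum_nonpos mult_nonneg_nonpos) auto
    then show "w T * bregman_diameter + (\<Sum>t = 1..T. w t * delta t) \<le> w T * bregman_diameter"
      by simp
  qed (use S P L in simp)
  also have "\<dots> = real T powr q * bregman_diameter * L / P"
    using S w T by simp
  also have "\<dots> \<le> (q + 1) * L * bregman_diameter / real T"
  proof -
    have "real T powr q * real T \<le> (q + 1) * P"
      using powr_le_sum_powr[OF q T] T by (simp add: P_def powr_add)
    then have "real T powr q * real T * (bregman_diameter * L) \<le> (q + 1) * P * (bregman_diameter * L)"
      using bregman_diameter_nonneg[OF Omega] L by (intro mult_right_mono) auto
    then show ?thesis using P T by (simp add: field_simps)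
  qed
  finally show ?thesis .
qed

end

theorem theorem5:
  fixes Xs :: "'x::euclidean_space set" and Ys :: "'y::euclidean_space set"
    and nrm :: "'x \<times> 'y \<Rightarrow> real"
    and phi :: "'x \<times> 'y \<Rightarrow> real"
    and gx :: "'x \<times> 'y \<Rightarrow> 'x" and gy :: "'x \<times> 'y \<Rightarrow> 'y"
    and L :: real
    and psi :: "'x \<times> 'y \<Rightarrow> real" and gpsi :: "'x \<times> 'y \<Rightarrow> 'x \<times> 'y"
    and z0 :: "'x \<times> 'y" and z zt :: "nat \<Rightarrow> 'x \<times> 'y"
    and tau w :: "nat \<Rightarrow> real"
  assumes norm: "is_norm nrm"
    and Xs: "closed Xs" "convex Xs" and Ys: "closed Ys" "convex Ys"
    and cvx: "\<forall>y\<in>Ys. convex_on Xs (\<lambda>x. phi (x, y))"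
    and ccv: "\<forall>x\<in>Xs. concave_on Ys (\<lambda>y. phi (x, y))"
    and diff: "\<forall>p\<in>Xs \<times> Ys. (phi has_derivative (\<lambda>(h, k). gx p \<bullet> h + gy p \<bullet> k)) (at p within Xs \<times> Ys)"
    and Fbdd: "bdd_above ((\<lambda>p. dual_norm nrm (sp_op gx gy p)) ` (Xs \<times> Ys))"
    and Lip: "\<forall>p\<in>Xs \<times> Ys. \<forall>p'\<in>Xs \<times> Ys.
                dual_norm nrm (sp_op gx gy p - sp_op gx gy p') \<le> L * nrm (p - p')"
    and psi_diff: "\<forall>p. (psi has_derivative (\<lambda>h. gpsi p \<bullet> h)) (at p)"
    and psi_sc: "strongly_convex_wrt nrm psi"
    and Omega_bdd: "bdd_above {bregman psi gpsi p p' | p p'. p \<in> Xs \<times> Ys \<and> p' \<in> Xs \<times> Ys}"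
    and z0: "z0 \<in> Xs \<times> Ys" and z_0: "z 0 = z0"
    and tau: "\<forall>t. 0 < tau t"
    and zt_def: "\<forall>t. zt t = prox psi gpsi (Xs \<times> Ys) (tau t *\<^sub>R sp_op gx gy (z t)) (z t)"
    and z_Suc: "\<forall>t. z (Suc t) = prox psi gpsi (Xs \<times> Ys) (tau t *\<^sub>R sp_op gx gy (zt t)) (z t)"
    and w_nonneg: "\<forall>t\<ge>1. 0 \<le> w t"
    and w_mono: "\<forall>s t. 1 \<le> s \<longrightarrow> s \<le> t \<longrightarrow> w s \<le> w t"
  shows
   "(let Omega = Sup {bregman psi gpsi p p' | p p'. p \<in> Xs \<times> Ys \<and> p' \<in> Xs \<times> Ys};
         delta = (\<lambda>t. tau t * (sp_op gx gy (zt t) \<bullet> (zt t - z (Suc t)))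
                        - bregman psi gpsi (z (Suc t)) (z t));
         S = (\<lambda>T. \<Sum>t = 1..T. w t * tau t);
         zbar = (\<lambda>T. (1 / S T) *\<^sub>R (\<Sum>t = 1..T. (w t * tau t) *\<^sub>R zt t))
     in (\<forall>T\<ge>1. 0 < S T \<longrightarrow>
           (\<forall>x\<in>Xs. \<forall>y\<in>Ys.
              phi (fst (zbar T), y) - phi (x, snd (zbar T))
                \<le> (w T * Omega + (\<Sum>t = 1..T. w t * delta t)) / S T))
      \<and> (\<forall>q::real. 0 \<le> q \<and> (\<forall>t. tau t = 1 / L) \<and> (\<forall>t\<ge>1. w t = real t powr q) \<longrightarrow>
           (\<forall>t. delta t \<le> 0) \<and>
           (\<forall>T\<ge>1. \<forall>x\<in>Xs. \<forall>y\<in>Ys.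
              phi (fst (zbar T), y) - phi (x, snd (zbar T)) \<le> (q + 1) * L * Omega / real T)))"
proof -
  interpret mirror_prox nrm psi gpsi Xs Ys phi gx gy z zt tau
    by unfold_locales (use assms in \<open>auto intro: closed_Times convex_Times\<close>)
  have "tau t * L \<le> 1" if "\<forall>t. tau t = 1 / L" for t
    using that tau_pos[of t] by (simp add: zero_less_divide_iff)
  then show ?thesis
    using ergodic_gap_bound[OF Omega_bdd w_nonneg w_mono] delta_nonpos[OF Lip]
      ergodic_gap_bound_powr_weights[OF Lip Omega_bdd]
    unfolding Let_def delta_def weight_sum_def ergodic_average_def bregman_diameter_def by blast
qed

end
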